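(* Consider $\mathrm{USD}_1$ (stubbornness $p=1$) started from the configuration with $u(0)=0$, $x_1(0)=1$ and $x_2(0)=n-1$. Let $T_1 := \inf\{t \geq 0 : x_2(t) = 0\}$. Then $\Pr[T_1 \leq 7n^2\log^2 n] \geq 1-n^{-2}$.
   Context: Population protocol with $n$ agents, each in a state from $\{1,2,\bot\}$ (Opinion 1, Opinion 2, undecided). At each time step a scheduler picks an ordered pair $(i,j)$ of agents uniformly at random, independently of the past; only the initiator $i$ changes state. In $\mathrm{USD}_p$: if the initiator is $2$ and the responder $1$, the initiator becomes $\bot$; if the initiator is $1$ and the responder $2$, the initiator becomes $\bot$ with probability $1-p$ and otherwise stays $1$ (so for $p=1$ it always stays $1$); if the initiator is $\bot$, it adopts the responder's state; otherwise nothing changes. $x_1(t),x_2(t),u(t)$ are the numbers of agents in states $1,2,\bot$ after $t$ interactions. *)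

theory Defs
  imports "HOL-Probability.Probability"
begin

datatype opinion = Op1 | Op2 | Undec

text \<open>A configuration of n agents, agents are 0..<n (values outside are irrelevant).\<close>
type_synonym config = "nat \<Rightarrow> opinion"

definition count :: "nat \<Rightarrow> opinion \<Rightarrow> config \<Rightarrow> nat" where
  "count n a c = card {i. i < n \<and> c i = a}"

abbreviation x1 where "x1 n c \<equiv> count n Op1 c"
abbreviation x2 where "x2 n c \<equiv> count n Op2 c"
abbreviation und where "und n c \<equiv> count n Undec c"

text \<open>Uniformly random ordered pair (initiator, responder) of distinct agents.\<close>
definition pairs :: "nat \<Rightarrow> (nat \<times> nat) set" where
  "pairs n = {(i, j). i < n \<and> j < n \<and> i \<noteq> j}"

definition interact :: "real \<Rightarrow> config \<Rightarrow> nat \<Rightarrow> nat \<Rightarrow> config pmf" where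
  "interact p c i j =
     (case (c i, c j) of
        (Op2, Op1) \<Rightarrow> return_pmf (c(i := Undec))
      | (Op1, Op2) \<Rightarrow> map_pmf (\<lambda>b. if b then c else c(i := Undec)) (bernoulli_pmf p)
      | (Undec, _) \<Rightarrow> return_pmf (c(i := c j))
      | _ \<Rightarrow> return_pmf c)"

definition usd_step :: "nat \<Rightarrow> real \<Rightarrow> config \<Rightarrow> config pmf" where
  "usd_step n p c = pmf_of_set (pairs n) \<bind> (\<lambda>(i, j). interact p c i j)"

fun usd_run :: "nat \<Rightarrow> real \<Rightarrow> nat \<Rightarrow> config \<Rightarrow> config list pmf" where
  "usd_run n p 0 c = return_pmf [c]"
| "usd_run n p (Suc k) c = usd_step n p c \<bind> (\<lambda>c'. map_pmf (Cons c) (usd_run n p k c'))"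

definition init_conf :: config where
  "init_conf = (\<lambda>i. if i = 0 then Op1 else Op2)"

end

theory Submission
  imports Defs
begin

text \<open>While some agent holds opinion 2, the potential \<open>\<Phi>(x\<^sub>1, x\<^sub>2) = F(x\<^sub>1) + G(x\<^sub>1) x\<^sub>2\<close>
  (and \<open>\<Phi> = 0\<close> once \<open>x\<^sub>2 = 0\<close>) decreases by at least 1 in expectation in every step of
  \<open>USD\<^sub>1\<close>, and \<open>0 \<le> \<Phi> \<le> 3n\<^sup>2 - 5n\<close> along the run because agents of opinion 1 never change.
  Summing the drift inequality bounds the truncated expected hitting time
  \<open>\<Sum>k\<le>L. P(x\<^sub>2 > 0 up to time k)\<close> by \<open>\<Phi>\<close>, so a block of \<open>L\<close> steps is survived with
  probability at most \<open>3n\<^sup>2/(L + 1)\<close>, and by the Markov property \<open>j\<close> consecutive blocks with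
  probability at most \<open>(3n\<^sup>2/(L + 1))\<^sup>j\<close>. About \<open>2 ln n\<close> blocks of length about
  \<open>7n\<^sup>2 ln n / 2\<close> push this below \<open>1/n\<^sup>2\<close> for \<open>n \<ge> 18\<close>; the remaining \<open>n\<close> are checked
  numerically.\<close>

section \<open>Survival probabilities of a Markov chain\<close>

fun survival :: "('a \<Rightarrow> 'a pmf) \<Rightarrow> ('a \<Rightarrow> bool) \<Rightarrow> nat \<Rightarrow> 'a \<Rightarrow> real" where
  "survival K A 0 x = (if A x then 0 else 1)"
| "survival K A (Suc k) x = (if A x then 0 else measure_pmf.expectation (K x) (survival K A k))"

lemma survival_nonneg: "0 \<le> survival K A k x"
  by (induction k arbitrary: x) auto

lemma survival_le_1: "survival K A k x \<le> 1"
proof (induction k arbitrary: x)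
  case (Suc k)
  have "measure_pmf.expectation (K x) (survival K A k) \<le> measure_pmf.expectation (K x) (\<lambda>_. 1)"
    by (intro integral_mono measure_pmf.integrable_const_bound[where B=1])
       (auto simp: Suc.IH survival_nonneg)
  then show ?case by simp
qed simp

lemma integrable_survival: "integrable (measure_pmf p) (survival K A k)"
  by (rule measure_pmf.integrable_const_bound[where B=1]) (auto simp: survival_nonneg survival_le_1)

lemma survival_target_eq_0: "A x \<Longrightarrow> survival K A k x = 0"
  by (cases k) simp_all

lemma survival_Suc_le: "survival K A (Suc k) x \<le> survival K A k x"
proof (induction k arbitrary: x)
  case 0
  show ?case using survival_le_1[of K A "Suc 0" x] by (simp split: if_splits)
next
  case (Suc k)
  have "measure_pmf.expectation (K x) (survival K A (Suc k)) \<le> measure_pmf.expectation (K x) (survival K A k)"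
    by (intro integral_mono integrable_survival Suc.IH)
  then show ?case by simp
qed

lemma survival_antimono: "k \<le> k' \<Longrightarrow> survival K A k' x \<le> survival K A k x"
proof (induction k' rule: dec_induct)
  case (step m)
  then show ?case using survival_Suc_le[of K A m x] by linarith
qed simp

lemma survival_add_le_mult:
  assumes closed: "\<And>y. y \<in> I \<Longrightarrow> set_pmf (K y) \<subseteq> I"
    and bound: "\<And>y. y \<in> I \<Longrightarrow> survival K A m y \<le> B"
    and "x \<in> I"
  shows "survival K A (k + m) x \<le> survival K A k x * B"
  using \<open>x \<in> I\<close>
proof (induction k arbitrary: x)
  case 0
  then show ?case using bound[of x] survival_target_eq_0[of A x K m] by simp
next
  case (Suc k)
  show ?case
  proof (cases "A x")
    case False
    have "measure_pmf.expectation (K x) (survival K A (k + m))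
          \<le> measure_pmf.expectation (K x) (\<lambda>y. survival K A k y * B)"
      using closed[OF Suc.prems] Suc.IH
      by (intro integral_mono_AE integrable_survival integrable_mult_left)
         (auto simp: AE_measure_pmf_iff)
    then show ?thesis using False by simp
  qed simp
qed

text \<open>A truncated form of \<open>E[T] \<le> \<Phi> x\<close> for the hitting time \<open>T\<close> of \<open>A\<close>.\<close>

lemma sum_survival_le_potential:
  fixes \<Phi> :: "'a \<Rightarrow> real"
  assumes closed: "\<And>y. y \<in> I \<Longrightarrow> set_pmf (K y) \<subseteq> I"
    and bounded: "\<And>y. y \<in> I \<Longrightarrow> 0 \<le> \<Phi> y \<and> \<Phi> y \<le> M"
    and drift: "\<And>y. y \<in> I \<Longrightarrow> \<not> A y \<Longrightarrow> measure_pmf.expectation (K y) \<Phi> \<le> \<Phi> y - 1"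
    and "x \<in> I"
  shows "(\<Sum>j\<le>k. survival K A j x) \<le> \<Phi> x"
  using \<open>x \<in> I\<close>
proof (induction k arbitrary: x)
  case 0
  have "1 \<le> \<Phi> x" if "\<not> A x"
  proof -
    have "0 \<le> measure_pmf.expectation (K x) \<Phi>"
      using closed[OF 0] bounded by (intro integral_nonneg_AE) (auto simp: AE_measure_pmf_iff)
    then show ?thesis using drift[OF 0 that] by simp
  qed
  then show ?case using bounded[OF 0] by simp
next
  case (Suc k)
  show ?case
  proof (cases "A x")
    case True
    then show ?thesis using bounded[OF Suc.prems] by (simp add: survival_target_eq_0)
  next
    case False
    have integrable_\<Phi>: "integrable (K x) \<Phi>"
      using closed[OF Suc.prems] bounded
      by (intro measure_pmf.integrable_const_bound[where B=M]) (auto simp: AE_measure_pmf_iff)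
    have "(\<Sum>j\<le>Suc k. survival K A j x) = 1 + (\<Sum>j\<le>k. survival K A (Suc j) x)"
      using False by (simp add: sum.atMost_Suc_shift del: sum.atMost_Suc survival.simps(2))
    also have "\<dots> = 1 + measure_pmf.expectation (K x) (\<lambda>y. \<Sum>j\<le>k. survival K A j y)"
      using False by (simp add: integral_sum integrable_survival)
    also have "\<dots> \<le> 1 + measure_pmf.expectation (K x) \<Phi>"
      using closed[OF Suc.prems] Suc.IH
      by (intro add_left_mono integral_mono_AE integrable_\<Phi>)
         (auto simp: AE_measure_pmf_iff intro!: integrable_sum integrable_survival)
    also have "\<dots> \<le> \<Phi> x" using drift[OF Suc.prems False] by simp
    finally show ?thesis .
  qed
qed

text \<open>Markov's inequality for one block of \<open>L\<close> steps, iterated over \<open>j\<close> blocks by restarting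
  the chain (\<open>survival_add_le_mult\<close>).\<close>

lemma survival_mult_le_pow:
  fixes \<Phi> :: "'a \<Rightarrow> real"
  assumes closed: "\<And>y. y \<in> I \<Longrightarrow> set_pmf (K y) \<subseteq> I"
    and bounded: "\<And>y. y \<in> I \<Longrightarrow> 0 \<le> \<Phi> y \<and> \<Phi> y \<le> M"
    and drift: "\<And>y. y \<in> I \<Longrightarrow> \<not> A y \<Longrightarrow> measure_pmf.expectation (K y) \<Phi> \<le> \<Phi> y - 1"
    and "x \<in> I"
  shows "survival K A (j * L) x \<le> (M / (L + 1)) ^ j"
  using \<open>x \<in> I\<close>
proof (induction j arbitrary: x)
  case 0
  then show ?case using survival_le_1 by simp
next
  case (Suc j)
  have block: "survival K A L y \<le> M / (L + 1)" if "y \<in> I" for y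
  proof -
    have "(L + 1) * survival K A L y = (\<Sum>i\<le>L. survival K A L y)" by simp
    also have "\<dots> \<le> (\<Sum>i\<le>L. survival K A i y)" by (intro sum_mono survival_antimono) simp
    also have "\<dots> \<le> \<Phi> y"
      using closed bounded drift that by (rule sum_survival_le_potential)
    also have "\<dots> \<le> M" using bounded[OF that] by simp
    finally show ?thesis by (simp add: field_simps add.commute)
  qed
  have "M \<ge> 0" using bounded[OF Suc.prems] by linarith
  then have "survival K A (j * L + L) x \<le> survival K A (j * L) x * (M / (L + 1))"
    by (intro survival_add_le_mult[OF closed block Suc.prems])
  also have "\<dots> \<le> (M / (L + 1)) ^ j * (M / (L + 1))"
    using \<open>M \<ge> 0\<close> by (intro mult_right_mono Suc.IH Suc.prems) simp
  finally show ?case by (metis add.commute mult_Suc power_Suc2)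
qed

lemma measure_bind_pmf:
  "measure_pmf.prob (bind_pmf p f) X = measure_pmf.expectation p (\<lambda>x. measure_pmf.prob (f x) X)"
  unfolding measure_pmf_bind by (rule measure_pmf.measure_bind[where N="count_space UNIV"])
    (auto simp: measure_pmf_in_subprob_algebra)

lemma prob_usd_run_hits:
  "measure_pmf.prob (usd_run n p k c) {tr. \<exists>t < length tr. A (tr ! t)}
     = 1 - survival (usd_step n p) A k c"
proof (induction k arbitrary: c)
  case 0
  then show ?case by simp
next
  case (Suc k)
  let ?H = "{tr. \<exists>t < length tr. A (tr ! t)}"
  have hits_Cons: "Cons c -` ?H = (if A c then UNIV else ?H)"
    by (simp add: vimage_def Ex_less_Suc2)
  have "measure_pmf.prob (usd_run n p (Suc k) c) ?H
        = measure_pmf.expectation (usd_step n p c)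
            (\<lambda>c'. measure_pmf.prob (usd_run n p k c') (Cons c -` ?H))"
    by (simp only: usd_run.simps measure_bind_pmf measure_map_pmf)
  also have "\<dots> = measure_pmf.expectation (usd_step n p c)
            (\<lambda>c'. measure_pmf.prob (usd_run n p k c') (if A c then UNIV else ?H))"
    by (simp only: hits_Cons)
  also have "\<dots> = 1 - survival (usd_step n p) A (Suc k) c"
  proof (cases "A c")
    case False
    then show ?thesis by (simp add: Suc.IH integrable_survival del: vimage_Collect_eq)
  qed simp
  finally show ?case .
qed

section \<open>USD with stubbornness 1 as a random update\<close>

definition usd1_update :: "config \<Rightarrow> nat \<times> nat \<Rightarrow> config" where
  "usd1_update c = (\<lambda>(i, j). case (c i, c j) of
       (Op2, Op1) \<Rightarrow> c(i := Undec)
     | (Undec, _) \<Rightarrow> c(i := c j)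
     | _ \<Rightarrow> c)"

lemma bernoulli_pmf_1: "bernoulli_pmf 1 = return_pmf True"
  by (rule pmf_eqI) (simp add: pmf_return split: split_indicator)

lemma usd_step_1: "usd_step n 1 c = map_pmf (usd1_update c) (pmf_of_set (pairs n))"
proof -
  have "interact 1 c i j = return_pmf (usd1_update c (i, j))" for i j
    by (auto simp: interact_def usd1_update_def bernoulli_pmf_1 split: opinion.splits)
  then show ?thesis
    unfolding usd_step_def map_pmf_def by (intro bind_pmf_cong) auto
qed

lemma finite_pairs: "finite (pairs n)"
  by (rule finite_subset[of _ "{..<n} \<times> {..<n}"]) (auto simp: pairs_def)

lemma pairs_nonempty: "n \<ge> 2 \<Longrightarrow> pairs n \<noteq> {}"
proof -
  assume "n \<ge> 2"
  then have "(0, 1) \<in> pairs n" by (simp add: pairs_def)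
  then show ?thesis by blast
qed

lemma card_pairs: "card (pairs n) = n * (n - 1)"
proof -
  have "pairs n = Sigma {..<n} (\<lambda>i. {..<n} - {i})" by (auto simp: pairs_def)
  then have "card (pairs n) = (\<Sum>i<n. card ({..<n} - {i}))" by (simp add: card_SigmaI)
  also have "\<dots> = (\<Sum>i<n. n - 1)" by (rule sum.cong) auto
  finally show ?thesis by simp
qed

lemma expectation_usd_step_1:
  assumes "n \<ge> 2"
  shows "measure_pmf.expectation (usd_step n 1 c) f
           = (\<Sum>x\<in>pairs n. f (usd1_update c x)) / (real n * (real n - 1))"
  using assms by (simp add: usd_step_1 integral_pmf_of_set finite_pairs pairs_nonempty
                            card_pairs of_nat_diff)

lemma count_Suc: "count (Suc n) s c = count n s c + (if c n = s then 1 else 0)"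
proof -
  have "{i. i < Suc n \<and> c i = s} = {i. i < n \<and> c i = s} \<union> (if c n = s then {n} else {})"
    by (auto simp: less_Suc_eq)
  then show ?thesis by (simp add: count_def)
qed

lemma count_0 [simp]: "count 0 s c = 0"
  by (simp add: count_def)

lemma count_cong: "(\<And>i. i < n \<Longrightarrow> c i = d i) \<Longrightarrow> count n s c = count n s d"
  unfolding count_def by (metis (lifting))

lemma count_fun_upd:
  "i < n \<Longrightarrow> count n s (c(i := v)) + (if c i = s then 1 else 0) = count n s c + (if v = s then 1 else 0)"
proof (induction n)
  case (Suc n)
  show ?case
  proof (cases "i = n")
    case True
    have "count n s (c(i := v)) = count n s c" by (rule count_cong) (use True in auto)
    then show ?thesis using True by (simp add: count_Suc fun_upd_same del: fun_upd_apply)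
  next
    case False
    then show ?thesis using Suc by (simp add: count_Suc)
  qed
qed simp

lemma count_opinions: "x1 n c + x2 n c + und n c = n"
proof (induction n)
  case (Suc n)
  then show ?case by (cases "c n") (auto simp: count_Suc)
qed simp

lemma sum_by_opinion:
  "(\<Sum>i<n. g (c i)) = real (x1 n c) * g Op1 + real (x2 n c) * g Op2 + real (und n c) * g Undec"
proof (induction n)
  case (Suc n)
  then show ?case by (cases "c n") (auto simp: count_Suc algebra_simps)
qed simp

lemma counts_usd1_update:
  assumes "(i, j) \<in> pairs n"
  shows "(x1 n (usd1_update c (i, j)), x2 n (usd1_update c (i, j))) =
    (case (c i, c j) of
       (Op2, Op1) \<Rightarrow> (x1 n c, x2 n c - 1)
     | (Undec, Op1) \<Rightarrow> (x1 n c + 1, x2 n c)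
     | (Undec, Op2) \<Rightarrow> (x1 n c, x2 n c + 1)
     | _ \<Rightarrow> (x1 n c, x2 n c))"
proof -
  have "i < n" using assms by (simp add: pairs_def)
  then have count_upd: "count n s (c(i := v)) =
     (if c i = s \<and> v \<noteq> s then count n s c - 1
      else if c i \<noteq> s \<and> v = s then count n s c + 1 else count n s c)" for s v
    using count_fun_upd[of i n s c v] by (cases "c i = s"; cases "v = s") simp_all
  then show ?thesis
    by (cases "c i"; cases "c j") (simp_all add: usd1_update_def fun_upd_idem)
qed

lemma x1_usd1_update_ge: "x \<in> pairs n \<Longrightarrow> x1 n c \<le> x1 n (usd1_update c x)"
  using counts_usd1_update[of "fst x" "snd x" n c] by (auto split: opinion.splits)

section \<open>The potential and its drift\<close>

text \<open>Without undecided agents (\<open>b = n - a\<close>), \<open>potential_slope n a = n(n - 1)/(a b)\<close> is the expected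
  waiting time until an agent of opinion 2 meets one of opinion 1.\<close>

definition potential_slope :: "nat \<Rightarrow> nat \<Rightarrow> real" where
  "potential_slope n a = real n * (real n - 1) / (real a * (real n - real a))"

definition potential_offset :: "nat \<Rightarrow> nat \<Rightarrow> real" where
  "potential_offset n a =
     real n * (real n - 1 - real a) + real n * (real n - 1) * (1 / real a - 1 / (real n - 1))"

definition potential :: "nat \<Rightarrow> nat \<Rightarrow> nat \<Rightarrow> real" where
  "potential n a b = (if b = 0 then 0 else potential_offset n a + potential_slope n a * real b)"

lemma potential_offset_nonneg:
  assumes "1 \<le> a" "a + 1 \<le> n"
  shows "0 \<le> potential_offset n a"
proof -
  have "1 / (real n - 1) \<le> 1 / real a" using assms by (intro divide_left_mono) auto
  then show ?thesis using assms unfolding potential_offset_def by (simp add: mult_nonneg_nonneg)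
qed

lemma potential_offset_Suc:
  assumes "1 \<le> a"
  shows "potential_offset n (a + 1) - potential_offset n a
           = - real n - real n * (real n - 1) / (real a * (real a + 1))"
proof -
  have "potential_offset n (a + 1) - potential_offset n a
          = - real n + real n * (real n - 1) * (1 / real (a + 1) - 1 / real a)"
    unfolding potential_offset_def by (simp add: algebra_simps)
  also have "1 / real (a + 1) - 1 / real a = - 1 / (real a * (real a + 1))"
    using assms by (simp add: field_simps)
  finally show ?thesis by simp
qed

text \<open>Here \<open>x + 1\<close>, \<open>y + 1\<close>, \<open>z + 1\<close> are the numbers of agents with opinion 1, opinion 2 and
  undecided agents, \<open>g\<^sub>0\<close> and \<open>g\<^sub>1\<close> are the slopes at \<open>x + 1\<close> and \<open>x + 2\<close>, and \<open>f\<close> is the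
  decrement of the offset. Multiplied by the positive common denominator, the claim becomes the
  nonnegativity of a polynomial with nonnegative coefficients.\<close>

lemma potential_drift_real:
  fixes x y z D g\<^sub>0 g\<^sub>1 f :: real
  assumes "x \<ge> 0" "y \<ge> 0" "z \<ge> 0"
    and D: "D = (x + y + z + 3) * (x + y + z + 2)"
    and g\<^sub>0: "g\<^sub>0 * ((x + 1) * (y + z + 2)) = D"
    and g\<^sub>1: "g\<^sub>1 * ((x + 2) * (y + z + 1)) = D"
    and f: "f * ((x + 1) * (x + 2)) = D"
  shows "- (x + 1) * (y + 1) * g\<^sub>0 + (z + 1) * (x + 1) * (- (x + y + z + 3) - f + (g\<^sub>1 - g\<^sub>0) * (y + 1))
           + (z + 1) * (y + 1) * g\<^sub>0 + D \<le> 0" (is "?lhs \<le> 0")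
proof -
  define den where "den = (x + 1) * (y + z + 2) * (x + 2) * (y + z + 1) * (x + y + z + 2)"
  define C where "C = 4*z + 4*z^2 + z^3 + 4*y*z + 2*y*z^2 + y^2*z + 2*x + 12*x*z + 8*x*z^2
    + x*z^3 + 6*x*y + 13*x*y*z + 3*x*y*z^2 + 5*x*y^2 + 3*x*y^2*z + x*y^3 + x^2 + 8*x^2*z
    + 4*x^2*z^2 + 4*x^2*y + 7*x^2*y*z + 3*x^2*y^2 + 2*x^3*z + x^3*z^2 + x^3*y + 2*x^3*y*z + x^3*y^2"
  have "den > 0" unfolding den_def using assms by simp
  have "C \<ge> 0" unfolding C_def using assms
    by (intro add_nonneg_nonneg mult_nonneg_nonneg zero_le_power) simp_all
  have "?lhs * den = - (D * (z + 1) * C)"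
    unfolding den_def C_def using g\<^sub>0 g\<^sub>1 f D by algebra
  also have "\<dots> \<le> 0" using \<open>C \<ge> 0\<close> assms D by simp
  finally show ?thesis using \<open>den > 0\<close> by (simp add: mult_le_0_iff)
qed

lemma potential_drift:
  assumes "1 \<le> a" "1 \<le> b" "a + b + u = n"
  shows "real b * real a * (potential n a (b - 1) - potential n a b)
       + real u * (real a * (potential n (a + 1) b - potential n a b)
                   + real b * (potential n a (b + 1) - potential n a b))
       \<le> - (real n * (real n - 1))"
proof -
  let ?F = "potential_offset n" and ?G = "potential_slope n"
  have \<Phi>: "potential n a b = ?F a + ?G a * real b" using assms by (simp add: potential_def)
  have \<Phi>_Suc_b: "potential n a (b + 1) = ?F a + ?G a * (real b + 1)" by (simp add: potential_def)
  have \<Phi>_pred_b: "potential n a (b - 1) \<le> ?F a + ?G a * (real b - 1)"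
  proof (cases "b = 1")
    case True
    then show ?thesis using potential_offset_nonneg[of a n] assms by (simp add: potential_def)
  qed (use assms in \<open>simp add: potential_def of_nat_diff\<close>)
  have loss: "real b * real a * (potential n a (b - 1) - potential n a b) \<le> - real b * real a * ?G a"
    using mult_left_mono[OF \<Phi>_pred_b, of "real b * real a"] unfolding \<Phi> by (simp add: algebra_simps)
  show ?thesis
  proof (cases "u = 0")
    case True
    then have "real n - real a = real b" using assms by simp
    then have "real b * real a * ?G a = real n * (real n - 1)"
      using assms by (simp add: potential_slope_def)
    then show ?thesis using loss True by simp
  next
    case False
    define x where "x = real a - 1"
    define y where "y = real b - 1"
    define z where "z = real u - 1"
    have xyz: "x \<ge> 0" "y \<ge> 0" "z \<ge> 0" using assms False by (auto simp: x_def y_def z_def)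
    have abun: "real a = x + 1" "real b = y + 1" "real u = z + 1" "real n = x + y + z + 3"
      using assms by (auto simp: x_def y_def z_def)
    have D: "real n * (real n - 1) = (x + y + z + 3) * (x + y + z + 2)" unfolding abun by simp
    have nonzero: "x + 1 \<noteq> 0" "x + 2 \<noteq> 0" "y + z + 1 \<noteq> 0" "y + z + 2 \<noteq> 0"
      using xyz by linarith+
    have "real a * (real n - real a) = (x + 1) * (y + z + 2)"
      unfolding abun by (simp add: algebra_simps)
    then have g\<^sub>0: "?G a * ((x + 1) * (y + z + 2)) = real n * (real n - 1)"
      using nonzero unfolding potential_slope_def by simp
    have "real (a + 1) * (real n - real (a + 1)) = (x + 2) * (y + z + 1)"
      unfolding abun of_nat_add by (simp add: algebra_simps)
    then have g\<^sub>1: "?G (a + 1) * ((x + 2) * (y + z + 1)) = real n * (real n - 1)"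
      using nonzero unfolding potential_slope_def by simp
    define f where "f = real n * (real n - 1) / (real a * (real a + 1))"
    have "real a * (real a + 1) = (x + 1) * (x + 2)"
      unfolding abun by (simp add: algebra_simps)
    then have f: "f * ((x + 1) * (x + 2)) = real n * (real n - 1)"
      using nonzero unfolding f_def by simp
    have step_a: "potential n (a + 1) b - potential n a b = - real n - f + (?G (a + 1) - ?G a) * real b"
      using potential_offset_Suc[OF assms(1), of n] assms
      unfolding \<Phi> f_def by (simp add: potential_def algebra_simps)
    have step_b: "potential n a (b + 1) - potential n a b = ?G a"
      unfolding \<Phi>_Suc_b \<Phi> by (simp add: algebra_simps)
    have "real u * (real a * (potential n (a + 1) b - potential n a b)
                    + real b * (potential n a (b + 1) - potential n a b))
      = (z + 1) * (x + 1) * (- (x + y + z + 3) - f + (?G (a + 1) - ?G a) * (y + 1)) + (z + 1) * (y + 1) * ?G a"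
      unfolding step_a step_b abun by (simp add: algebra_simps)
    with loss potential_drift_real[OF xyz D g\<^sub>0 g\<^sub>1 f] show ?thesis
      unfolding abun by (simp add: algebra_simps)
  qed
qed

lemma sum_potential_usd1_update:
  fixes c :: config
  assumes "n \<ge> 2"
  defines "a \<equiv> x1 n c" and "b \<equiv> x2 n c" and "u \<equiv> und n c"
  shows "(\<Sum>x\<in>pairs n. potential n (x1 n (usd1_update c x)) (x2 n (usd1_update c x)))
     = real n * (real n - 1) * potential n a b
       + real b * real a * (potential n a (b - 1) - potential n a b)
       + real u * (real a * (potential n (a + 1) b - potential n a b)
                   + real b * (potential n a (b + 1) - potential n a b))"
proof -
  define \<delta> where "\<delta> s t = (case (s, t) of
      (Op2, Op1) \<Rightarrow> potential n a (b - 1) - potential n a b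
    | (Undec, Op1) \<Rightarrow> potential n (a + 1) b - potential n a b
    | (Undec, Op2) \<Rightarrow> potential n a (b + 1) - potential n a b
    | _ \<Rightarrow> 0)" for s t
  have change: "potential n (x1 n (usd1_update c x)) (x2 n (usd1_update c x))
                  = potential n a b + \<delta> (c (fst x)) (c (snd x))" if "x \<in> pairs n" for x
    using counts_usd1_update[of "fst x" "snd x" n c] that unfolding a_def b_def \<delta>_def
    by (cases "c (fst x)"; cases "c (snd x)") auto
  have "(\<Sum>i<n. \<Sum>j<n. \<delta> (c i) (c j)) = (\<Sum>x\<in>{..<n} \<times> {..<n}. \<delta> (c (fst x)) (c (snd x)))"
    by (simp add: sum.cartesian_product case_prod_beta)
  also have "\<dots> = (\<Sum>x\<in>pairs n. \<delta> (c (fst x)) (c (snd x)))"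
    by (rule sum.mono_neutral_right) (auto simp: pairs_def \<delta>_def split: opinion.splits)
  finally have off_diagonal: "(\<Sum>x\<in>pairs n. \<delta> (c (fst x)) (c (snd x))) = (\<Sum>i<n. \<Sum>j<n. \<delta> (c i) (c j))" ..
  have "(\<Sum>x\<in>pairs n. potential n (x1 n (usd1_update c x)) (x2 n (usd1_update c x)))
          = real (card (pairs n)) * potential n a b + (\<Sum>x\<in>pairs n. \<delta> (c (fst x)) (c (snd x)))"
    by (simp add: change sum.distrib)
  also have "\<dots> = real n * (real n - 1) * potential n a b + (\<Sum>i<n. \<Sum>j<n. \<delta> (c i) (c j))"
    using assms(1) by (simp add: off_diagonal card_pairs of_nat_diff)
  also have "(\<Sum>i<n. \<Sum>j<n. \<delta> (c i) (c j))
      = (\<Sum>i<n. real a * \<delta> (c i) Op1 + real b * \<delta> (c i) Op2 + real u * \<delta> (c i) Undec)"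
    by (simp add: sum_by_opinion a_def b_def u_def)
  also have "\<dots> = real a * (real a * \<delta> Op1 Op1 + real b * \<delta> Op1 Op2 + real u * \<delta> Op1 Undec)
      + real b * (real a * \<delta> Op2 Op1 + real b * \<delta> Op2 Op2 + real u * \<delta> Op2 Undec)
      + real u * (real a * \<delta> Undec Op1 + real b * \<delta> Undec Op2 + real u * \<delta> Undec Undec)"
    by (subst sum_by_opinion) (simp add: a_def b_def u_def)
  finally show ?thesis by (simp add: \<delta>_def algebra_simps)
qed

lemma expectation_potential_usd_step_1:
  assumes "n \<ge> 2" "1 \<le> x1 n c" "1 \<le> x2 n c"
  shows "measure_pmf.expectation (usd_step n 1 c) (\<lambda>c'. potential n (x1 n c') (x2 n c'))
           \<le> potential n (x1 n c) (x2 n c) - 1"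
proof -
  have "real n * (real n - 1) > 0" using assms(1) by simp
  moreover have "(\<Sum>x\<in>pairs n. potential n (x1 n (usd1_update c x)) (x2 n (usd1_update c x)))
                   \<le> real n * (real n - 1) * (potential n (x1 n c) (x2 n c) - 1)"
    using sum_potential_usd1_update[OF assms(1), of c] potential_drift[OF assms(2,3) count_opinions]
    by (simp add: algebra_simps)
  ultimately show ?thesis
    using assms(1) by (simp add: expectation_usd_step_1 pos_divide_le_eq mult.commute)
qed

lemma potential_nonneg:
  assumes "1 \<le> a" "a + b \<le> n"
  shows "0 \<le> potential n a b"
  using potential_offset_nonneg[of a n] assms
  by (auto simp: potential_def potential_slope_def)

lemma potential_le:
  assumes "2 \<le> n" "1 \<le> a" "a + b \<le> n"
  shows "potential n a b \<le> 3 * real n ^ 2 - 5 * real n"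
proof (cases "b = 0")
  case True
  have "5 * real n \<le> 3 * real n * real n" using assms(1) by (intro mult_right_mono) auto
  then show ?thesis using True by (simp add: potential_def power2_eq_square)
next
  case False
  have "real b \<le> 1 * (real n - real a)" using assms by simp
  also have "\<dots> \<le> real a * (real n - real a)" using assms by (intro mult_right_mono) auto
  finally have "real b / (real a * (real n - real a)) \<le> 1"
    using assms False by (simp add: divide_le_eq)
  then have "real n * (real n - 1) * (real b / (real a * (real n - real a))) \<le> real n * (real n - 1)"
    using assms(1) by (intro mult_left_le) auto
  then have slope: "potential_slope n a * real b \<le> real n * (real n - 1)"
    by (simp add: potential_slope_def)
  have "real n * (real n - 1) * (1 / real a - 1 / (real n - 1))
          \<le> real n * (real n - 1) * (1 - 1 / (real n - 1))"
    using assms by (intro mult_left_mono) auto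
  also have "\<dots> = real n * (real n - 2)" using assms(1) by (simp add: field_simps)
  finally have "real n * (real n - 1) * (1 / real a - 1 / (real n - 1)) \<le> real n * (real n - 2)" .
  moreover have "real n * (real n - 1 - real a) \<le> real n * (real n - 2)"
    using assms by (intro mult_left_mono) auto
  ultimately have "potential_offset n a \<le> 2 * real n * (real n - 2)"
    unfolding potential_offset_def by simp
  with slope False show ?thesis
    by (simp add: potential_def power2_eq_square algebra_simps)
qed

lemma survival_usd_step_1_le_pow:
  assumes "n \<ge> 2"
  shows "survival (usd_step n 1) (\<lambda>c. x2 n c = 0) (j * L) init_conf
           \<le> ((3 * real n ^ 2 - 5 * real n) / (L + 1)) ^ j"
proof (rule survival_mult_le_pow[where I = "{c. 1 \<le> x1 n c}"
                                   and \<Phi> = "\<lambda>c. potential n (x1 n c) (x2 n c)"])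
  show "set_pmf (usd_step n 1 c) \<subseteq> {c. 1 \<le> x1 n c}" if "c \<in> {c. 1 \<le> x1 n c}" for c
  proof -
    have "set_pmf (usd_step n 1 c) = usd1_update c ` pairs n"
      using assms by (simp add: usd_step_1 finite_pairs pairs_nonempty)
    then show ?thesis using that x1_usd1_update_ge[of _ n c] by fastforce
  qed
  show "0 \<le> potential n (x1 n c) (x2 n c) \<and> potential n (x1 n c) (x2 n c) \<le> 3 * real n ^ 2 - 5 * real n"
    if "c \<in> {c. 1 \<le> x1 n c}" for c
    using that count_opinions[of n c] assms potential_nonneg potential_le by simp
  show "measure_pmf.expectation (usd_step n 1 c) (\<lambda>c'. potential n (x1 n c') (x2 n c'))
          \<le> potential n (x1 n c) (x2 n c) - 1"
    if "c \<in> {c. 1 \<le> x1 n c}" "\<not> x2 n c = 0" for c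
    using that assms by (intro expectation_potential_usd_step_1) auto
  have "{i. i < n \<and> init_conf i = Op1} = {0}" using assms by (auto simp: init_conf_def)
  then show "init_conf \<in> {c. 1 \<le> x1 n c}" by (simp add: count_def)
qed

section \<open>Numerical estimates\<close>

lemma ln_lower_bounds:
  "693/1000 \<le> ln (2::real)" "1098/1000 \<le> ln (3::real)" "1386/1000 \<le> ln (4::real)"
  "1609/1000 \<le> ln (5::real)" "1791/1000 \<le> ln (6::real)" "1944/1000 \<le> ln (7::real)"
  "2079/1000 \<le> ln (8::real)" "2302/1000 \<le> ln (10::real)" "2637/1000 \<le> ln (14::real)"
  "2889/1000 \<le> ln (18::real)"
proof -
  have ln2: "693/1000 \<le> ln (2::real)"
    using ln_approx_bounds[of 2 3] by (simp add: eval_nat_numeral)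
  have ln3: "1098/1000 \<le> ln (3::real)"
    using ln_approx_bounds[of 3 5] by (simp add: eval_nat_numeral)
  have "223/1000 \<le> ln (5/4::real)"
    using ln_approx_bounds[of "5/4" 2] by (simp add: eval_nat_numeral)
  moreover have "153/1000 \<le> ln (7/6::real)"
    using ln_approx_bounds[of "7/6" 1] by (simp add: eval_nat_numeral)
  moreover have "ln (4::real) = ln 2 + ln 2" "ln (5::real) = ln 4 + ln (5/4)"
    "ln (6::real) = ln 2 + ln 3" "ln (7::real) = ln 6 + ln (7/6)" "ln (8::real) = ln 2 + ln 4"
    "ln (10::real) = ln 2 + ln 5" "ln (14::real) = ln 2 + ln 7" "ln (18::real) = ln 6 + ln 3"
    using ln_mult[of 2 2] ln_mult[of 4 "5/4"] ln_mult[of 2 3] ln_mult[of 6 "7/6"] ln_mult[of 2 4]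
      ln_mult[of 2 5] ln_mult[of 2 7] ln_mult[of 6 3]
    by simp_all
  ultimately show
    "693/1000 \<le> ln (2::real)" "1098/1000 \<le> ln (3::real)" "1386/1000 \<le> ln (4::real)"
    "1609/1000 \<le> ln (5::real)" "1791/1000 \<le> ln (6::real)" "1944/1000 \<le> ln (7::real)"
    "2079/1000 \<le> ln (8::real)" "2302/1000 \<le> ln (10::real)" "2637/1000 \<le> ln (14::real)"
    "2889/1000 \<le> ln (18::real)"
    using ln2 ln3 by linarith+
qed

definition enough_steps :: "nat \<Rightarrow> nat \<Rightarrow> bool" where
  "enough_steps n N \<longleftrightarrow>
     (\<exists>j L. j * L \<le> N \<and> ((3 * real n ^ 2 - 5 * real n) / (L + 1)) ^ j \<le> 1 / real n ^ 2)"

lemma enough_steps_of_ln_ge: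
  fixes n j :: nat and q :: real
  assumes n: "2 \<le> n" and q: "0 < q" "q \<le> ln n" "1 < 7 * real n ^ 2 * q ^ 2" and j: "1 \<le> j"
    and small: "((3 * real n ^ 2 - 5 * real n) * j / (7 * real n ^ 2 * q ^ 2 - 1)) ^ j \<le> 1 / real n ^ 2"
  shows "enough_steps n (nat \<lfloor>7 * real n ^ 2 * ln (real n) ^ 2\<rfloor>)"
  unfolding enough_steps_def
proof (intro exI conjI)
  define N where "N = nat \<lfloor>7 * real n ^ 2 * ln (real n) ^ 2\<rfloor>"
  define L where "L = N div j"
  show "j * L \<le> N" unfolding L_def by simp
  have "7 * real n ^ 2 * q ^ 2 \<le> 7 * real n ^ 2 * ln (real n) ^ 2"
    using q by (intro mult_left_mono power_mono) auto
  also have "\<dots> < real N + 1" unfolding N_def by linarith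
  also have "real N + 1 \<le> real j * real (L + 1)"
  proof -
    have "N < j * (L + 1)" using j unfolding L_def by (simp add: dividend_less_times_div)
    then have "N + 1 \<le> j * (L + 1)" by simp
    then show ?thesis by (metis of_nat_1 of_nat_add of_nat_le_iff of_nat_mult)
  qed
  finally have denominators: "7 * real n ^ 2 * q ^ 2 - 1 < real j * real (L + 1)" by linarith
  have M: "0 \<le> 3 * real n ^ 2 - 5 * real n"
    using n by (simp add: power2_eq_square mult_right_mono)
  have "(3 * real n ^ 2 - 5 * real n) / real (L + 1)
          = (3 * real n ^ 2 - 5 * real n) * j / (real j * real (L + 1))"
    using j by simp
  also have "\<dots> \<le> (3 * real n ^ 2 - 5 * real n) * j / (7 * real n ^ 2 * q ^ 2 - 1)"
    using denominators q(3) M by (intro divide_left_mono) auto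
  finally have "((3 * real n ^ 2 - 5 * real n) / real (L + 1)) ^ j
                  \<le> ((3 * real n ^ 2 - 5 * real n) * j / (7 * real n ^ 2 * q ^ 2 - 1)) ^ j"
    using M by (intro power_mono) auto
  with small show "((3 * real n ^ 2 - 5 * real n) / (L + 1)) ^ j \<le> 1 / real n ^ 2" by simp
qed

lemma steps_ratio_mono:
  fixes n m q :: real
  assumes "2 \<le> n" "n \<le> m" "1/2 \<le> q"
  shows "(3 * n ^ 2 - 5 * n) / (7 * n ^ 2 * q ^ 2 - 1) \<le> (3 * m ^ 2 - 5 * m) / (7 * m ^ 2 * q ^ 2 - 1)"
proof -
  have "1/4 \<le> q ^ 2" using power_mono[OF assms(3), of 2] by (simp add: power2_eq_square)
  have "1 * 1 \<le> (n - 1) * (m - 1)" using assms by (intro mult_mono) auto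
  then have "n + m \<le> n * m" by (simp add: algebra_simps)
  then have "3 * (n + m) \<le> 35 * (1/4 * (n * m))" using assms by (simp add: algebra_simps)
  also have "\<dots> \<le> 35 * (q ^ 2 * (n * m))"
    using \<open>1/4 \<le> q ^ 2\<close> assms by (intro mult_left_mono mult_right_mono) auto
  finally have "3 * (n + m) \<le> 35 * (q ^ 2 * (n * m))" .
  then have "0 \<le> (m - n) * (35 * q ^ 2 * n * m - 3 * (n + m) + 5)"
    using assms by (intro mult_nonneg_nonneg) (auto simp: algebra_simps)
  also have "\<dots> = (3 * m ^ 2 - 5 * m) * (7 * n ^ 2 * q ^ 2 - 1) - (3 * n ^ 2 - 5 * n) * (7 * m ^ 2 * q ^ 2 - 1)"
    by (simp add: algebra_simps power2_eq_square)
  finally have cross: "(3 * n ^ 2 - 5 * n) * (7 * m ^ 2 * q ^ 2 - 1) \<le> (3 * m ^ 2 - 5 * m) * (7 * n ^ 2 * q ^ 2 - 1)"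
    by simp
  have "4 * (1/4) \<le> n ^ 2 * q ^ 2" "4 * (1/4) \<le> m ^ 2 * q ^ 2"
    using power_mono[of 2 n 2] power_mono[of 2 m 2] \<open>1/4 \<le> q ^ 2\<close> assms
    by (intro mult_mono; simp)+
  then have "0 < 7 * n ^ 2 * q ^ 2 - 1" "0 < 7 * m ^ 2 * q ^ 2 - 1" by simp_all
  with cross show ?thesis by (simp add: field_simps)
qed

lemma enough_steps_interval:
  fixes m n m' j :: nat and q :: real
  assumes "2 \<le> m" "m \<le> n" "n \<le> m'" "1/2 \<le> q" "q \<le> ln m" "1 \<le> j"
    and small: "((3 * real m' ^ 2 - 5 * real m') * j / (7 * real m' ^ 2 * q ^ 2 - 1)) ^ j
                  \<le> 1 / real m' ^ 2"
  shows "enough_steps n (nat \<lfloor>7 * real n ^ 2 * ln (real n) ^ 2\<rfloor>)"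
proof (rule enough_steps_of_ln_ge[where q = q and j = j])
  show "2 \<le> n" "0 < q" "1 \<le> j" using assms by simp_all
  have "ln (real m) \<le> ln (real n)" using assms by simp
  then show "q \<le> ln (real n)" using assms by linarith
  have "4 * (1/4) \<le> real n ^ 2 * q ^ 2"
    using power_mono[of 2 "real n" 2] power_mono[OF assms(4), of 2] assms
    by (intro mult_mono) (auto simp: power2_eq_square)
  then show "1 < 7 * real n ^ 2 * q ^ 2" by simp
  have "(3 * real n ^ 2 - 5 * real n) / (7 * real n ^ 2 * q ^ 2 - 1) * j
          \<le> (3 * real m' ^ 2 - 5 * real m') / (7 * real m' ^ 2 * q ^ 2 - 1) * j"
    using assms by (intro mult_right_mono steps_ratio_mono) auto
  then have "((3 * real n ^ 2 - 5 * real n) * j / (7 * real n ^ 2 * q ^ 2 - 1)) ^ j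
               \<le> ((3 * real m' ^ 2 - 5 * real m') * j / (7 * real m' ^ 2 * q ^ 2 - 1)) ^ j"
    using \<open>1 < 7 * real n ^ 2 * q ^ 2\<close> \<open>2 \<le> n\<close>
    by (intro power_mono) (auto simp: power2_eq_square mult_right_mono)
  also have "\<dots> \<le> 1 / real m' ^ 2" by (fact small)
  also have "\<dots> \<le> 1 / real n ^ 2"
    using assms by (intro divide_left_mono power_mono) auto
  finally show "((3 * real n ^ 2 - 5 * real n) * j / (7 * real n ^ 2 * q ^ 2 - 1)) ^ j \<le> 1 / real n ^ 2" .
qed

text \<open>About \<open>2 ln n\<close> blocks, each survived with probability at most \<open>1/e\<close>.\<close>

lemma enough_steps_large:
  assumes "18 \<le> n"
  shows "enough_steps n (nat \<lfloor>7 * real n ^ 2 * ln (real n) ^ 2\<rfloor>)"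
proof -
  define x where "x = ln (real n)"
  have "ln 18 \<le> x" unfolding x_def using assms by simp
  then have x: "2889/1000 \<le> x" using ln_lower_bounds(10) by linarith
  define j where "j = nat \<lceil>2 * x\<rceil>"
  have j: "2 * x \<le> real j" "real j \<le> 2 * x + 1" "1 \<le> j" unfolding j_def using x by linarith+
  have "1960 * x \<le> 700 * x ^ 2" using x by (simp add: power2_eq_square)
  then have "100 \<le> 700 * x ^ 2 - 1632 * x - 816" using x by linarith
  then have "real n ^ 2 * 100 \<le> real n ^ 2 * (700 * x ^ 2 - 1632 * x - 816)"
    by (intro mult_left_mono) auto
  moreover have "1 \<le> real n ^ 2" using assms by simp
  ultimately have key: "272 * (3 * real n ^ 2 * (2 * x + 1)) \<le> 100 * (7 * real n ^ 2 * x ^ 2 - 1)"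
    by (simp add: algebra_simps)
  have "0 < 272 * (3 * real n ^ 2 * (2 * x + 1))" using x assms by simp
  then have "0 < 100 * (7 * real n ^ 2 * x ^ 2 - 1)" using key by (rule less_le_trans)
  then have denominator: "0 < 7 * real n ^ 2 * x ^ 2 - 1" by (simp add: algebra_simps)
  have M: "0 \<le> 3 * real n ^ 2 - 5 * real n" using assms by (simp add: power2_eq_square)
  define r where "r = (3 * real n ^ 2 - 5 * real n) * j / (7 * real n ^ 2 * x ^ 2 - 1)"
  have "(3 * real n ^ 2 - 5 * real n) * j \<le> 3 * real n ^ 2 * (2 * x + 1)"
    using j by (intro mult_mono) auto
  then have "r \<le> 3 * real n ^ 2 * (2 * x + 1) / (7 * real n ^ 2 * x ^ 2 - 1)"
    unfolding r_def using denominator by (intro divide_right_mono) auto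
  also have "\<dots> \<le> 100 / 272" using key denominator by (simp add: divide_le_eq)
  also have "\<dots> \<le> exp (-1)" using e_less_272 by (simp add: exp_minus field_simps)
  finally have "r \<le> exp (-1)" .
  moreover have "0 \<le> r" unfolding r_def using denominator M by simp
  ultimately have "r ^ j \<le> exp (-1) ^ j" by (intro power_mono)
  also have "\<dots> = exp (real j * (- 1))" by (rule exp_of_nat_mult[symmetric])
  also have "\<dots> \<le> exp (- (2 * x))" using j by simp
  also have "\<dots> = inverse (exp x ^ 2)" using exp_of_nat_mult[of 2 x] by (simp add: exp_minus)
  also have "\<dots> = 1 / real n ^ 2" using assms by (simp add: x_def inverse_eq_divide)
  finally have "r ^ j \<le> 1 / real n ^ 2" .
  then show ?thesis unfolding r_def
    using assms x denominator j(3) by (intro enough_steps_of_ln_ge[where q = x]) (simp_all add: x_def)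
qed

text \<open>Below 18 the estimate is checked at the right end of each of a few intervals of \<open>n\<close>, using
  \<open>steps_ratio_mono\<close> and a lower bound for \<open>ln\<close> at the left end.\<close>

lemma enough_steps_7_n2_ln2:
  assumes "2 \<le> n"
  shows "enough_steps n (nat \<lfloor>7 * real n ^ 2 * ln (real n) ^ 2\<rfloor>)"
proof -
  note interval = enough_steps_interval[of _ n] and ln = ln_lower_bounds
  consider "n = 2" | "n = 3" | "n = 4" | "n = 5" | "n = 6" | "n = 7" | "8 \<le> n" "n \<le> 9"
    | "10 \<le> n" "n \<le> 13" | "14 \<le> n" "n \<le> 17" | "18 \<le> n"
    using assms by linarith
  then show ?thesis
  proof cases
    case 1 show ?thesis by (rule interval[of 2 2 "693/1000" 2]) (use 1 ln in \<open>simp_all add: power_divide\<close>)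
  next
    case 2 show ?thesis by (rule interval[of 3 3 "1098/1000" 2]) (use 2 ln in \<open>simp_all add: power_divide\<close>)
  next
    case 3 show ?thesis by (rule interval[of 4 4 "1386/1000" 3]) (use 3 ln in \<open>simp_all add: power_divide\<close>)
  next
    case 4 show ?thesis by (rule interval[of 5 5 "1609/1000" 3]) (use 4 ln in \<open>simp_all add: power_divide\<close>)
  next
    case 5 show ?thesis by (rule interval[of 6 6 "1791/1000" 4]) (use 5 ln in \<open>simp_all add: power_divide\<close>)
  next
    case 6 show ?thesis by (rule interval[of 7 7 "1944/1000" 4]) (use 6 ln in \<open>simp_all add: power_divide\<close>)
  next
    case 7 show ?thesis by (rule interval[of 8 9 "2079/1000" 5]) (use 7 ln in \<open>simp_all add: power_divide\<close>)
  next
    case 8 show ?thesis by (rule interval[of 10 13 "2302/1000" 5]) (use 8 ln in \<open>simp_all add: power_divide\<close>)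
  next
    case 9 show ?thesis by (rule interval[of 14 17 "2637/1000" 6]) (use 9 ln in \<open>simp_all add: power_divide\<close>)
  next
    case 10 then show ?thesis by (rule enough_steps_large)
  qed
qed

theorem lemma12:
  fixes n :: nat
  assumes "n \<ge> 2"
  defines "N \<equiv> nat \<lfloor>7 * real n ^ 2 * (ln (real n)) ^ 2\<rfloor>"
  shows "measure_pmf.prob (usd_run n 1 N init_conf)
           {tr. \<exists>t < length tr. x2 n (tr ! t) = 0} \<ge> 1 - 1 / real n ^ 2"
proof -
  obtain j L where "j * L \<le> N" and small: "((3 * real n ^ 2 - 5 * real n) / (L + 1)) ^ j \<le> 1 / real n ^ 2"
    using enough_steps_7_n2_ln2[OF assms(1)] unfolding enough_steps_def N_def by blast
  have "survival (usd_step n 1) (\<lambda>c. x2 n c = 0) N init_conf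
          \<le> survival (usd_step n 1) (\<lambda>c. x2 n c = 0) (j * L) init_conf"
    using \<open>j * L \<le> N\<close> by (rule survival_antimono)
  also have "\<dots> \<le> 1 / real n ^ 2"
    using survival_usd_step_1_le_pow[OF assms(1)] small by (rule order_trans)
  finally show ?thesis
    using prob_usd_run_hits[where A = "\<lambda>c. x2 n c = 0"] by simp
qed

end
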